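(* Let $a>2$ and $s\ge 1$ be integers and $A=(sa,\ sa+1,\ sa+a)$. Then $g(A)=as(a+s-2)-1$.
   Context: For a tuple $A$ of positive integers with $\gcd(A)=1$, the Frobenius number $g(A)$ is the largest nonnegative integer that cannot be written as a nonnegative integer combination of the entries of $A$. *)

theory Defs
  imports Main
begin

definition representable :: "nat list \<Rightarrow> nat \<Rightarrow> bool" where
  "representable A n \<longleftrightarrow>
     (\<exists>c :: nat list. length c = length A \<and> n = (\<Sum>i<length A. c ! i * A ! i))"

text \<open>Frobenius number: the largest nonnegative integer not representable
  (meaningful when gcd of the entries is 1, all entries positive, and some integer
  is not representable).\<close>
definition frobenius :: "nat list \<Rightarrow> nat" where
  "frobenius A = (GREATEST n. \<not> representable A n)"

end

theory Submission
  imports Defs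
begin

text \<open>Write \<open>m = s a\<close>. Since \<open>x m + y (m + 1) + z (m + a) = k m + y + a z\<close> with
  \<open>k = x + y + z\<close>, the representable numbers are exactly the \<open>k m + y + a z\<close> with
  \<open>y + z \<le> k\<close>. Every \<open>n \<ge> m (a + s - 2)\<close> has this form: take \<open>k = n div m\<close> and
  let \<open>y < a\<close>, \<open>z < s\<close> be the digits of \<open>n mod m\<close> in base \<open>a\<close>. Conversely, if
  \<open>m (a + s - 2) - 1 = k m + y + a z\<close> then \<open>k = a + s - 2 - j\<close> with \<open>j \<ge> 1\<close> and
  \<open>y + 1 + a z = j m\<close>, so \<open>y + 1 = a w\<close> with \<open>w \<ge> 1\<close> and \<open>w + z = j s\<close>; then
  \<open>y + z \<ge> j s + a - 2 > k\<close>.\<close>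

lemma representable_Nil: "representable [] n \<longleftrightarrow> n = 0"
  by (simp add: representable_def)

lemma representable_Cons:
  "representable (p # A) n \<longleftrightarrow> (\<exists>c r. n = c * p + r \<and> representable A r)"
proof
  assume "representable (p # A) n"
  then obtain cs where "length cs = Suc (length A)"
    and n: "n = (\<Sum>i<Suc (length A). cs ! i * (p # A) ! i)"
    by (auto simp: representable_def)
  then obtain c cs' where "cs = c # cs'" "length cs' = length A"
    by (auto simp: length_Suc_conv)
  with n have "n = c * p + (\<Sum>i<length A. cs' ! i * A ! i)"
    by (simp del: sum.lessThan_Suc add: sum.lessThan_Suc_shift)
  with \<open>length cs' = length A\<close> show "\<exists>c r. n = c * p + r \<and> representable A r"
    by (auto simp: representable_def)
next
  assume "\<exists>c r. n = c * p + r \<and> representable A r"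
  then obtain c cs where "length cs = length A" "n = c * p + (\<Sum>i<length A. cs ! i * A ! i)"
    by (auto simp: representable_def)
  then show "representable (p # A) n"
    unfolding representable_def
    by (intro exI[of _ "c # cs"]) (simp del: sum.lessThan_Suc add: sum.lessThan_Suc_shift)
qed

lemma representable_triple:
  "representable [p, q, r] n \<longleftrightarrow> (\<exists>x y z. n = x * p + y * q + z * r)"
  by (simp add: representable_Cons representable_Nil) (metis add.assoc)

lemma frobenius_eqI:
  assumes "\<not> representable A N" and "\<And>n. N < n \<Longrightarrow> representable A n"
  shows "frobenius A = N"
  unfolding frobenius_def
  by (rule Greatest_equality) (use assms not_le in blast)+

lemma representable_shifted_triple_iff:
  "representable [m, m + 1, m + a] n \<longleftrightarrow> (\<exists>k y z. y + z \<le> k \<and> n = k * m + y + a * z)"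
proof
  assume "representable [m, m + 1, m + a] n"
  then obtain x y z where "n = x * m + y * (m + 1) + z * (m + a)"
    by (auto simp: representable_triple)
  then have "y + z \<le> x + y + z \<and> n = (x + y + z) * m + y + a * z"
    by (simp add: algebra_simps)
  then show "\<exists>k y z. y + z \<le> k \<and> n = k * m + y + a * z" by blast
next
  assume "\<exists>k y z. y + z \<le> k \<and> n = k * m + y + a * z"
  then obtain x y z where "n = (x + y + z) * m + y + a * z"
    by (metis le_add_diff_inverse2 add.assoc)
  then have "n = x * m + y * (m + 1) + z * (m + a)"
    by (simp add: algebra_simps)
  then show "representable [m, m + 1, m + a] n"
    by (auto simp: representable_triple)
qed

lemma representable_shifted_triple_ge:
  fixes a s n :: nat
  assumes "0 < a" "0 < s" "s * a * (a + s - 2) \<le> n"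
  shows "representable [s * a, s * a + 1, s * a + a] n"
proof -
  define k where "k = n div (s * a)"
  define r where "r = n mod (s * a)"
  have "r < s * a" using assms(1,2) by (simp add: r_def)
  then have "r div a < s" by (simp add: less_mult_imp_div_less)
  moreover have "r mod a < a" using assms(1) by simp
  moreover have "a + s - 2 \<le> k"
    using div_le_mono[OF assms(3), of "s * a"] assms(1,2) by (simp add: k_def)
  ultimately have "r mod a + r div a \<le> k" by linarith
  moreover have "n = k * (s * a) + r mod a + a * (r div a)"
    using div_mult_mod_eq[of n "s * a"] by (simp add: k_def r_def)
  ultimately show ?thesis
    unfolding representable_shifted_triple_iff by (intro exI conjI)
qed

lemma not_representable_shifted_triple:
  fixes a s :: nat
  assumes "0 < a" "0 < s" "2 < a + s"
  shows "\<not> representable [s * a, s * a + 1, s * a + a] (s * a * (a + s - 2) - 1)"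
proof
  define m where "m = s * a"
  define d where "d = a + s - 2"
  have d_eq: "d + 2 = a + s" using assms(3) by (simp add: d_def)
  assume "representable [s * a, s * a + 1, s * a + a] (s * a * (a + s - 2) - 1)"
  then obtain k y z where yz: "y + z \<le> k" and N: "m * d - 1 = k * m + y + a * z"
    unfolding representable_shifted_triple_iff m_def d_def by (elim exE conjE)
  have "0 < m * d" using assms d_eq by (simp add: m_def)
  with N have N': "m * d = k * m + y + a * z + 1" by linarith
  have "k < d"
  proof (rule ccontr)
    assume "\<not> k < d"
    then have "d * m \<le> k * m" by simp
    with N' show False by (simp add: mult.commute)
  qed
  then obtain j where "0 < j" and kj: "d = k + j"
    using less_imp_add_positive by blast
  from N' have digits: "y + 1 + a * z = a * (j * s)"
    by (simp add: kj m_def algebra_simps)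
  then have "a dvd y + 1"
    using dvd_add_left_iff[of a "a * z" "y + 1"] by simp
  then obtain w where w: "y + 1 = a * w" by blast
  then have "1 \<le> w" by (cases w) auto
  have "a * (w + z) = a * (j * s)" using digits w by (simp add: algebra_simps)
  then have "w + z = j * s" using assms(1) by simp
  moreover have "w + a \<le> a * w + 1"
    using \<open>1 \<le> w\<close> assms(1) by (cases w) auto
  moreover have "s \<le> j * s" using \<open>0 < j\<close> by simp
  ultimately show False using w yz kj d_eq \<open>0 < j\<close> by linarith
qed

theorem mainTheorem3:
  fixes a s :: nat
  assumes "a > 2" and "s \<ge> 1"
  shows "int (frobenius [s*a, s*a + 1, s*a + a]) = int a * int s * (int a + int s - 2) - 1"
proof -
  have "frobenius [s*a, s*a + 1, s*a + a] = s * a * (a + s - 2) - 1"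
  proof (rule frobenius_eqI)
    show "\<not> representable [s*a, s*a + 1, s*a + a] (s * a * (a + s - 2) - 1)"
      using not_representable_shifted_triple assms by simp
    show "representable [s*a, s*a + 1, s*a + a] n" if "s * a * (a + s - 2) - 1 < n" for n
      using representable_shifted_triple_ge[of a s n] that assms by simp
  qed
  moreover have "1 \<le> s * a * (a + s - 2)" using assms by simp
  ultimately show ?thesis using assms by (simp add: algebra_simps)
qed

end
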